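(* Let $(G,\sigma)$ be a colored planar, color-connected graph with vertices $s,t$ connected in $G$. If $\pi^*$ is an $s$-$t$ path minimizing $|\sigma(\pi^* )|$ and $C^*$ is a color-hitting set of minimum cardinality, then $|\sigma(\pi^* )|=|C^*|$.
   Context: $G=(V,E)$ finite undirected, $\sigma:V\to 2^{[m]}$, $\sigma(\pi)=\bigcup_{v\in\pi}\sigma(v)$. Color-connected: for each color $c$ the vertices whose color set contains $c$ induce a connected subgraph. $V(C)=\{v:\sigma(v)\cap C\ne\emptyset\}$. $S\subseteq[m]$ is an $s$-$t$ color separator if no $s$-$t$ path in $G$ avoids $V(S)$. A color-hitting set is a set $C\subseteq[m]$ with $C\cap S\ne\emptyset$ for all $s$-$t$ color separators $S$. *)

theory Defs
  imports "HOL-Analysis.Analysis"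
begin

definition simple_graph :: "'a set \<Rightarrow> 'a set set \<Rightarrow> bool" where
  "simple_graph V E \<longleftrightarrow> finite V \<and> (\<forall>e\<in>E. \<exists>u v. e = {u, v} \<and> u \<in> V \<and> v \<in> V \<and> u \<noteq> v)"

text \<open>Planarity: an embedding in the plane (vertices to distinct points, edges to arcs
  meeting only at common endpoints and passing through no other vertex).\<close>
definition planar_graph :: "'a set \<Rightarrow> 'a set set \<Rightarrow> bool" where
  "planar_graph V E \<longleftrightarrow>
     (\<exists>(p :: 'a \<Rightarrow> complex) (\<gamma> :: 'a set \<Rightarrow> real \<Rightarrow> complex).
        inj_on p V \<and>
        (\<forall>e\<in>E. arc (\<gamma> e) \<and> {pathstart (\<gamma> e), pathfinish (\<gamma> e)} = p ` e
               \<and> path_image (\<gamma> e) \<inter> p ` V = p ` e) \<and>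
        (\<forall>e\<in>E. \<forall>e'\<in>E. e \<noteq> e' \<longrightarrow> path_image (\<gamma> e) \<inter> path_image (\<gamma> e') = p ` (e \<inter> e')))"

definition path_in :: "'a set \<Rightarrow> 'a set set \<Rightarrow> 'a set \<Rightarrow> 'a \<Rightarrow> 'a \<Rightarrow> 'a list \<Rightarrow> bool" where
  "path_in V E U u w xs \<longleftrightarrow> xs \<noteq> [] \<and> hd xs = u \<and> last xs = w \<and> distinct xs \<and>
     set xs \<subseteq> V \<inter> U \<and> (\<forall>i. Suc i < length xs \<longrightarrow> {xs ! i, xs ! Suc i} \<in> E)"

abbreviation st_path :: "'a set \<Rightarrow> 'a set set \<Rightarrow> 'a \<Rightarrow> 'a \<Rightarrow> 'a list \<Rightarrow> bool" where
  "st_path V E s t xs \<equiv> path_in V E V s t xs"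

definition path_colors :: "('a \<Rightarrow> nat set) \<Rightarrow> 'a list \<Rightarrow> nat set" where
  "path_colors \<sigma> xs = (\<Union>v\<in>set xs. \<sigma> v)"

definition color_vertices :: "'a set \<Rightarrow> ('a \<Rightarrow> nat set) \<Rightarrow> nat set \<Rightarrow> 'a set" where
  "color_vertices V \<sigma> C = {v \<in> V. \<sigma> v \<inter> C \<noteq> {}}"

definition color_connected :: "'a set \<Rightarrow> 'a set set \<Rightarrow> ('a \<Rightarrow> nat set) \<Rightarrow> nat \<Rightarrow> bool" where
  "color_connected V E \<sigma> m \<longleftrightarrow>
     (\<forall>c\<in>{1..m}. let U = {v \<in> V. c \<in> \<sigma> v} in
        \<forall>u\<in>U. \<forall>w\<in>U. \<exists>xs. path_in V E U u w xs)"

definition color_separator :: "'a set \<Rightarrow> 'a set set \<Rightarrow> ('a \<Rightarrow> nat set) \<Rightarrow> nat \<Rightarrow> 'a \<Rightarrow> 'a \<Rightarrow> nat set \<Rightarrow> bool" where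
  "color_separator V E \<sigma> m s t S \<longleftrightarrow> S \<subseteq> {1..m} \<and>
     \<not> (\<exists>xs. st_path V E s t xs \<and> set xs \<inter> color_vertices V \<sigma> S = {})"

definition color_hitting_set :: "'a set \<Rightarrow> 'a set set \<Rightarrow> ('a \<Rightarrow> nat set) \<Rightarrow> nat \<Rightarrow> 'a \<Rightarrow> 'a \<Rightarrow> nat set \<Rightarrow> bool" where
  "color_hitting_set V E \<sigma> m s t C \<longleftrightarrow> C \<subseteq> {1..m} \<and>
     (\<forall>S. color_separator V E \<sigma> m s t S \<longrightarrow> C \<inter> S \<noteq> {})"

end

theory Submission
  imports Defs
begin

text \<open>The colour set of an s-t path meets every separator, so it is a hitting set. Conversely,
  the colours outside a hitting set C do not form a separator, so some s-t path avoids all of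
  them and uses only colours of C. Hence minimum path colour count and minimum hitting set size
  coincide.\<close>

lemma path_colors_subset:
  assumes "\<forall>v\<in>V. \<sigma> v \<subseteq> {1..m}" and "path_in V E U u w xs"
  shows "path_colors \<sigma> xs \<subseteq> {1..m}"
  using assms unfolding path_colors_def path_in_def by blast

lemma color_hitting_set_path_colors:
  assumes "\<forall>v\<in>V. \<sigma> v \<subseteq> {1..m}" and "st_path V E s t xs"
  shows "color_hitting_set V E \<sigma> m s t (path_colors \<sigma> xs)"
  unfolding color_hitting_set_def
proof (intro conjI allI impI)
  show "path_colors \<sigma> xs \<subseteq> {1..m}"
    using assms by (rule path_colors_subset)
next
  fix S assume "color_separator V E \<sigma> m s t S"
  then have "set xs \<inter> color_vertices V \<sigma> S \<noteq> {}"
    using assms(2) unfolding color_separator_def by blast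
  then show "path_colors \<sigma> xs \<inter> S \<noteq> {}"
    unfolding color_vertices_def path_colors_def by blast
qed

lemma color_hitting_set_obtains_path:
  assumes "\<forall>v\<in>V. \<sigma> v \<subseteq> {1..m}" and "color_hitting_set V E \<sigma> m s t C"
  obtains xs where "st_path V E s t xs" and "path_colors \<sigma> xs \<subseteq> C"
proof -
  let ?S = "{1..m} - C"
  have "\<not> color_separator V E \<sigma> m s t ?S"
    using assms(2) unfolding color_hitting_set_def by blast
  then obtain xs where xs: "st_path V E s t xs" and avoid: "set xs \<inter> color_vertices V \<sigma> ?S = {}"
    unfolding color_separator_def by blast
  have "path_colors \<sigma> xs \<subseteq> C"
  proof
    fix c assume "c \<in> path_colors \<sigma> xs"
    then obtain v where v: "v \<in> set xs" "c \<in> \<sigma> v"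
      unfolding path_colors_def by blast
    with xs have "v \<in> V"
      unfolding path_in_def by blast
    with avoid v have "\<sigma> v \<inter> ?S = {}"
      unfolding color_vertices_def by blast
    with assms(1) \<open>v \<in> V\<close> v(2) show "c \<in> C" by blast
  qed
  with xs show thesis by (rule that)
qed

theorem lemma2p2:
  fixes V :: "'a set" and E :: "'a set set" and \<sigma> :: "'a \<Rightarrow> nat set" and m :: nat
    and s t :: 'a and \<pi> :: "'a list" and C :: "nat set"
  assumes "simple_graph V E" and "planar_graph V E"
    and "\<forall>v\<in>V. \<sigma> v \<subseteq> {1..m}"
    and "color_connected V E \<sigma> m"
    and "s \<in> V" and "t \<in> V" and "\<exists>xs. st_path V E s t xs"
    and "st_path V E s t \<pi>"
    and "\<forall>xs. st_path V E s t xs \<longrightarrow> card (path_colors \<sigma> \<pi>) \<le> card (path_colors \<sigma> xs)"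
    and "color_hitting_set V E \<sigma> m s t C"
    and "\<forall>D. color_hitting_set V E \<sigma> m s t D \<longrightarrow> card C \<le> card D"
  shows "card (path_colors \<sigma> \<pi>) = card C"
proof (rule antisym)
  obtain xs where xs: "st_path V E s t xs" and "path_colors \<sigma> xs \<subseteq> C"
    using assms(3,10) by (rule color_hitting_set_obtains_path)
  moreover have "finite C"
    using assms(10) unfolding color_hitting_set_def by (meson finite_atLeastAtMost finite_subset)
  ultimately have "card (path_colors \<sigma> xs) \<le> card C"
    by (simp add: card_mono)
  with assms(9) xs show "card (path_colors \<sigma> \<pi>) \<le> card C"
    by (meson order_trans)
next
  show "card C \<le> card (path_colors \<sigma> \<pi>)"
    using assms(11) color_hitting_set_path_colors[OF assms(3,8)] by blast
qed

end
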